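(* There is an algorithm which, on input a prime $p$ and a primitive root $g$ modulo $p$ with $1<g<p$, computes every value $q_p(u)$, $0\le u<p-1$, using $O(p)$ arithmetic operations on $O(\log p)$-bit integers.
   Context: For a prime $p$ and an integer $u$ with $\gcd(u,p)=1$, the Fermat quotient $q_p(u)$ is the unique integer with $q_p(u)\equiv (u^{p-1}-1)/p \pmod p$ and $0\le q_p(u)\le p-1$; also $q_p(kp)=0$ for all $k\in\mathbb{Z}$. *)

theory Defs
  imports "HOL-Number_Theory.Number_Theory"
begin

definition fermat_quotient :: "nat \<Rightarrow> int \<Rightarrow> int" where
  "fermat_quotient p u =
     (if int p dvd u then 0 else ((u ^ (p - 1) - 1) div int p) mod int p)"

text \<open>Each executed instruction costs one step (one arithmetic operation or
  one memory access / jump). The bit length of the integers handled is measured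
  separately by bounding the absolute values of all memory cells during the run.\<close>

datatype instr =
    Const nat int
  | Add nat nat nat
  | Sub nat nat nat
  | Mul nat nat nat
  | Div nat nat nat
  | Rem nat nat nat
  | Load nat nat
  | Store nat nat
  | Jz nat nat
  | Jmp nat
  | Halt

type_synonym state = "nat \<times> (int \<Rightarrow> int)"

fun exec_instr :: "instr \<Rightarrow> state \<Rightarrow> state" where
  "exec_instr (Const r k) (pc, M) = (pc + 1, M(int r := k))"
| "exec_instr (Add r a b) (pc, M) = (pc + 1, M(int r := M (int a) + M (int b)))"
| "exec_instr (Sub r a b) (pc, M) = (pc + 1, M(int r := M (int a) - M (int b)))"
| "exec_instr (Mul r a b) (pc, M) = (pc + 1, M(int r := M (int a) * M (int b)))"
| "exec_instr (Div r a b) (pc, M) = (pc + 1, M(int r := M (int a) div M (int b)))"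
| "exec_instr (Rem r a b) (pc, M) = (pc + 1, M(int r := M (int a) mod M (int b)))"
| "exec_instr (Load r a) (pc, M) = (pc + 1, M(int r := M (M (int a))))"
| "exec_instr (Store a b) (pc, M) = (pc + 1, M(M (int a) := M (int b)))"
| "exec_instr (Jz r l) (pc, M) = (if M (int r) = 0 then (l, M) else (pc + 1, M))"
| "exec_instr (Jmp l) (pc, M) = (l, M)"
| "exec_instr Halt (pc, M) = (pc, M)"

definition halted :: "instr list \<Rightarrow> state \<Rightarrow> bool" where
  "halted prog s \<longleftrightarrow> fst s \<ge> length prog \<or> prog ! fst s = Halt"

definition step :: "instr list \<Rightarrow> state \<Rightarrow> state" where
  "step prog s = (if halted prog s then s else exec_instr (prog ! fst s) s)"

definition run :: "instr list \<Rightarrow> nat \<Rightarrow> state \<Rightarrow> state" where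
  "run prog n s = (step prog ^^ n) s"

definition init_state :: "nat \<Rightarrow> nat \<Rightarrow> state" where
  "init_state p g = (0, (\<lambda>_. 0)(0 := int p, 1 := int g))"

text \<open>The output q_p(u) is expected in cell 2 + u.\<close>

end

theory Submission
  imports Defs
begin

text \<open>
  Write x = g^k mod p. Congruence mod p lifts to congruence of p-th powers mod p^2, and
  x^p = x (1 + p Q) with Q \<equiv> q_p(x) (mod p); hence
  q_p(x) \<equiv> g^(-k) \<lfloor>(g^(pk) mod p^2) / p\<rfloor> (mod p), where g^(-k) \<equiv> g^((p-2)k).
  A single pass over k < p - 1 that updates g^k mod p, g^((p-2)k) mod p and g^(pk) mod p^2
  by one multiplication each therefore yields q_p at every nonzero residue, since g is a
  primitive root. Every number involved is a residue mod p^2 or a product of two of them,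
  so it stays below p^4.
\<close>

lemma cong_pow_modulus_square:
  fixes a b :: int
  assumes "[a = b] (mod int m)"
  shows "[a ^ m = b ^ m] (mod int m ^ 2)"
proof -
  have "[(\<Sum>i<m. b ^ (m - Suc i) * a ^ i) = (\<Sum>i<m. b ^ (m - Suc i) * b ^ i)] (mod int m)"
    by (intro cong_sum cong_mult cong_refl cong_pow assms)
  also have "(\<Sum>i<m. b ^ (m - Suc i) * b ^ i) = int m * b ^ (m - 1)"
    by (simp add: power_add[symmetric])
  also have "[int m * b ^ (m - 1) = 0] (mod int m)"
    by (simp add: cong_0_iff)
  finally have "int m dvd (\<Sum>i<m. b ^ (m - Suc i) * a ^ i)"
    by (simp add: cong_0_iff)
  moreover have "int m dvd a - b"
    using assms by (simp add: cong_iff_dvd_diff)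
  ultimately have "int m ^ 2 dvd (a - b) * (\<Sum>i<m. b ^ (m - Suc i) * a ^ i)"
    by (simp add: power2_eq_square mult_dvd_mono)
  then show ?thesis
    by (simp add: cong_iff_dvd_diff power_diff_sumr2)
qed

lemma fermat_quotient_range: "0 < p \<Longrightarrow> 0 \<le> fermat_quotient p u \<and> fermat_quotient p u < int p"
  by (simp add: fermat_quotient_def)

lemma fermat_quotient_via_pth_power:
  fixes y h :: int
  assumes p: "prime p" and y: "\<not> int p dvd y" and h: "[h * y = 1] (mod int p)"
  shows "(h * ((y ^ p mod int p ^ 2) div int p)) mod int p = fermat_quotient p (y mod int p)"
proof -
  define P where "P = int p"
  define x where "x = y mod P"
  define Q where "Q = (x ^ (p - 1) - 1) div P"
  define B where "B = y ^ p mod P ^ 2"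
  have "P > 0"
    using p P_def prime_gt_0_nat by simp
  then have x_range: "0 \<le> x" "x < P"
    by (simp_all add: x_def)
  have x_not_dvd: "\<not> P dvd x"
    using y by (simp add: x_def P_def dvd_mod_iff)
  then have "\<not> p dvd nat x"
    using x_range by (metis P_def int_nat_eq of_nat_dvd_iff)
  then have "[int (nat x ^ (p - 1)) = int 1] (mod P)"
    using fermat_theorem[OF p] P_def cong_int_iff by blast
  then have "x ^ (p - 1) = 1 + P * Q"
    using x_range by (simp add: Q_def cong_iff_dvd_diff cong_sym_eq)
  moreover have "x ^ p = x * x ^ (p - 1)"
    using prime_gt_0_nat[OF p] by (cases p) simp_all
  ultimately have x_pow_p: "x ^ p = x + P * (x * Q)"
    by (simp add: algebra_simps)
  have "[y = x] (mod P)"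
    by (simp add: x_def cong_def)
  then have "[y ^ p = x ^ p] (mod P ^ 2)"
    unfolding P_def by (rule cong_pow_modulus_square)
  then have B_cong: "[B = x + P * (x * Q)] (mod P ^ 2)"
    by (simp add: B_def x_pow_p cong_mod_left)
  then have "[B = x] (mod P)"
    by (rule cong_dvd_modulus[THEN cong_trans]) (simp_all add: cong_def)
  then have "B - x = P * (B div P)"
    using x_range by (metis cong_def mod_pos_pos_trivial minus_mod_eq_mult_div)
  then have "B - (x + P * (x * Q)) = P * (B div P - x * Q)"
    by (simp add: algebra_simps)
  then have "P ^ 2 dvd P * (B div P - x * Q)"
    using B_cong by (simp add: cong_iff_dvd_diff)
  then have "[B div P = x * Q] (mod P)"
    using \<open>P > 0\<close> by (simp add: power2_eq_square cong_iff_dvd_diff)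
  then have "[h * (B div P) = h * y * Q] (mod P)"
    using \<open>[y = x] (mod P)\<close>
    by (metis cong_scalar_left cong_scalar_right cong_sym cong_trans mult.assoc)
  also have "[h * y * Q = Q] (mod P)"
    using h P_def cong_scalar_right by fastforce
  finally show ?thesis
    using x_not_dvd by (simp add: fermat_quotient_def cong_def B_def Q_def x_def P_def)
qed

lemma run_0 [simp]: "run prog 0 s = s"
  by (simp add: run_def)

lemma run_Suc: "run prog (Suc n) s = run prog n (step prog s)"
  unfolding run_def funpow_Suc_right by simp

lemma run_numeral: "run prog (numeral n) s = run prog (pred_numeral n) (step prog s)"
  by (simp add: numeral_eq_Suc run_Suc)

lemma run_add: "run prog (m + n) s = run prog n (run prog m s)"
  unfolding run_def by (metis add.commute comp_apply funpow_add)

lemma step_exec: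
  "pc < length prog \<Longrightarrow> prog ! pc \<noteq> Halt \<Longrightarrow> step prog (pc, M) = exec_instr (prog ! pc) (pc, M)"
  by (simp add: step_def halted_def)

definition bounded_mem :: "int \<Rightarrow> (int \<Rightarrow> int) \<Rightarrow> bool" where
  "bounded_mem b M \<longleftrightarrow> (\<forall>a. \<bar>M a\<bar> \<le> b)"

lemma bounded_mem_zero: "0 \<le> b \<Longrightarrow> bounded_mem b (\<lambda>_. 0)"
  by (simp add: bounded_mem_def)

lemma bounded_mem_upd: "bounded_mem b M \<Longrightarrow> \<bar>v\<bar> \<le> b \<Longrightarrow> bounded_mem b (M(a := v))"
  by (simp add: bounded_mem_def)

definition bounded_run :: "instr list \<Rightarrow> int \<Rightarrow> nat \<Rightarrow> state \<Rightarrow> bool" where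
  "bounded_run prog b n s \<longleftrightarrow> (\<forall>m \<le> n. bounded_mem b (snd (run prog m s)))"

lemma bounded_run_0 [simp]: "bounded_run prog b 0 s \<longleftrightarrow> bounded_mem b (snd s)"
  by (simp add: bounded_run_def)

lemma bounded_run_Suc:
  "bounded_run prog b (Suc n) s \<longleftrightarrow> bounded_mem b (snd s) \<and> bounded_run prog b n (step prog s)"
  unfolding bounded_run_def less_Suc_eq_le[symmetric] All_less_Suc2
  by (simp add: run_Suc)

lemma bounded_run_numeral:
  "bounded_run prog b (numeral n) s \<longleftrightarrow>
     bounded_mem b (snd s) \<and> bounded_run prog b (pred_numeral n) (step prog s)"
  by (simp add: numeral_eq_Suc bounded_run_Suc)

lemma bounded_run_add:
  assumes "bounded_run prog b m s" and "bounded_run prog b n (run prog m s)"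
  shows "bounded_run prog b (m + n) s"
  unfolding bounded_run_def
proof (intro allI impI)
  fix i assume "i \<le> m + n"
  then consider "i \<le> m" | d where "i = m + d" "d \<le> n"
    by (metis le_add_diff_inverse nat_le_linear add_le_imp_le_left)
  then show "bounded_mem b (snd (run prog i s))"
    using assms unfolding bounded_run_def by cases (auto simp: run_add)
qed

lemma run_iterate:
  assumes body: "\<And>k s. k < N \<Longrightarrow> I k s \<Longrightarrow> I (Suc k) (run prog L s) \<and> bounded_run prog b L s"
    and inv_bounded: "\<And>k s. I k s \<Longrightarrow> bounded_mem b (snd s)"
    and start: "I 0 s"
  shows "I N (run prog (L * N) s) \<and> bounded_run prog b (L * N) s"
proof -
  have "I k (run prog (L * k) s) \<and> bounded_run prog b (L * k) s" if "k \<le> N" for k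
    using that
  proof (induction k)
    case 0
    then show ?case
      using start inv_bounded by simp
  next
    case (Suc k)
    then have "I k (run prog (L * k) s)" and "bounded_run prog b (L * k) s"
      by simp_all
    moreover have
      "I (Suc k) (run prog L (run prog (L * k) s)) \<and> bounded_run prog b L (run prog (L * k) s)"
      using body[of k "run prog (L * k) s"] Suc by simp
    moreover have "L * Suc k = L * k + L"
      by simp
    ultimately show ?case
      by (simp only: run_add bounded_run_add)
  qed
  then show ?thesis
    by simp
qed

lemma abs_le_pow4_if_le_square:
  fixes P v :: int
  assumes "1 \<le> P" and "\<bar>v\<bar> \<le> P * P"
  shows "\<bar>v\<bar> \<le> P ^ 4"
proof -
  have "1 \<le> P * P"
    using mult_mono[of 1 P 1 P] assms(1) by simp
  then have "P * P * 1 \<le> P * P * (P * P)"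
    by (intro mult_left_mono) auto
  then show ?thesis
    using assms(2) by (simp add: power4_eq_xxxx mult.assoc)
qed

lemma abs_mult_le_pow4:
  fixes P a b :: int
  assumes "\<bar>a\<bar> \<le> P * P" and "\<bar>b\<bar> \<le> P * P"
  shows "\<bar>a * b\<bar> \<le> P ^ 4"
  using mult_mono[OF assms order_trans[OF abs_ge_zero assms(1)] abs_ge_zero]
  by (simp add: abs_mult power4_eq_xxxx mult.assoc)

text \<open>
  Register map of the program below: 0 holds p, 1 holds g, 4 holds p^2, 5 holds 1, 6 is the
  loop counter and 8, 14, 15 are scratch. Lines 0--9 compute g^(p-2) mod p^2 in register 7;
  lines 10--18 derive g^(p-2) mod p (the inverse of g) in register 9 and g^p mod p^2 in
  register 10. Round k of the loop at line 19 holds g^k mod p, g^((p-2)k) mod p and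
  g^(pk) mod p^2 in registers 11--13 and stores q_p(g^k mod p) in cell -2 - (g^k mod p).
  The loop at line 34 then copies cell -i to cell i for i = p, ..., 2: the table is built at
  negative addresses because the output cells 2, ..., p overlap the registers.
\<close>

definition prog :: "instr list" where
"prog = [
  Mul 4 0 0, Const 5 1, Const 7 1, Sub 6 0 5, Sub 6 6 5,
  Jz 6 10, Mul 8 7 1, Rem 7 8 4, Sub 6 6 5, Jmp 5,
  Rem 9 7 0, Mul 8 7 1, Rem 8 8 4, Mul 8 8 1, Rem 10 8 4,
  Const 11 1, Const 12 1, Const 13 1, Sub 6 0 5,
  Jz 6 34, Div 8 13 0, Mul 8 8 12, Rem 8 8 0, Const 14 (-2), Sub 14 14 11, Store 14 8,
  Mul 15 11 1, Rem 11 15 0, Mul 15 12 9, Rem 12 15 0, Mul 15 13 10, Rem 13 15 4, Sub 6 6 5, Jmp 19,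
  Const 1 1, Sub 1 0 1, Jz 1 44, Const 1 0, Sub 1 1 0,
  Load 1 1, Store 0 1, Const 1 1, Sub 0 0 1, Jmp 34,
  Halt]"

lemmas exec_prog_simps = run_numeral run_Suc bounded_run_numeral bounded_run_Suc step_exec prog_def

text \<open>Separates table cells from registers when the program is executed symbolically.\<close>

lemma neg_eq_nonneg_iff [simp]:
  fixes a b :: int
  assumes "a < 0" and "0 \<le> b"
  shows "a = b \<longleftrightarrow> False" and "b = a \<longleftrightarrow> False"
  using assms by auto

definition quotient_table :: "nat \<Rightarrow> nat \<Rightarrow> nat \<Rightarrow> int \<Rightarrow> int" where
  "quotient_table p g k a =
     (if \<exists>j<k. a = -(2 + int g ^ j mod int p) then fermat_quotient p (-a - 2) else 0)"

definition inv_powers :: "nat \<Rightarrow> nat \<Rightarrow> nat \<Rightarrow> state \<Rightarrow> bool" where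
  "inv_powers p g k s \<longleftrightarrow> fst s = 5 \<and> snd s 0 = int p \<and> snd s 1 = int g
    \<and> snd s 4 = int p * int p \<and> snd s 5 = 1 \<and> snd s 6 = int p - 2 - int k
    \<and> snd s 7 = int g ^ k mod (int p * int p)
    \<and> (\<forall>a<0. snd s a = 0) \<and> bounded_mem (int p ^ 4) (snd s)"

definition inv_quotients :: "nat \<Rightarrow> nat \<Rightarrow> nat \<Rightarrow> state \<Rightarrow> bool" where
  "inv_quotients p g k s \<longleftrightarrow> fst s = 19 \<and> snd s 0 = int p \<and> snd s 1 = int g
    \<and> snd s 4 = int p * int p \<and> snd s 5 = 1 \<and> snd s 6 = int p - 1 - int k
    \<and> snd s 9 = int g ^ (p - 2) mod int p \<and> snd s 10 = int g ^ p mod (int p * int p)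
    \<and> snd s 11 = int g ^ k mod int p \<and> snd s 12 = int g ^ ((p - 2) * k) mod int p
    \<and> snd s 13 = int g ^ (p * k) mod (int p * int p)
    \<and> (\<forall>a<0. snd s a = quotient_table p g k a) \<and> bounded_mem (int p ^ 4) (snd s)"

definition inv_copy :: "nat \<Rightarrow> nat \<Rightarrow> nat \<Rightarrow> state \<Rightarrow> bool" where
  "inv_copy p g k s \<longleftrightarrow> fst s = 34 \<and> snd s 0 = int p - int k
    \<and> (\<forall>a<0. snd s a = quotient_table p g (p - 1) a)
    \<and> (\<forall>a. int p - int k < a \<and> a \<le> int p \<longrightarrow> snd s a = quotient_table p g (p - 1) (-a))
    \<and> bounded_mem (int p ^ 4) (snd s)"

lemma abs_quotient_table_less: "0 < p \<Longrightarrow> \<bar>quotient_table p g k a\<bar> < int p"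
  using fermat_quotient_range[of p] by (simp add: quotient_table_def)

context
  fixes p g :: nat
  assumes prime: "prime p" and g_gt_1: "1 < g" and g_lt_p: "g < p"
begin

lemma modulus_bounds:
  "3 \<le> int p" "0 \<le> int g" "int g < int p" "int p + 2 \<le> int p * int p"
  "1 mod int p = 1" "1 mod (int p * int p) = 1"
proof -
  show p3: "3 \<le> int p" "0 \<le> int g" "int g < int p"
    using prime g_gt_1 g_lt_p by simp_all
  have "3 * int p \<le> int p * int p"
    using p3(1) by (intro mult_right_mono) auto
  with p3(1) show "int p + 2 \<le> int p * int p"
    by linarith
  with p3(1) show "1 mod int p = 1" "1 mod (int p * int p) = 1"
    by (intro mod_pos_pos_trivial; linarith)+
qed

lemma abs_mod_le_square:
  "\<bar>a mod int p\<bar> \<le> int p * int p" "\<bar>a mod (int p * int p)\<bar> \<le> int p * int p"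
proof -
  have "0 < int p" "0 < int p * int p"
    using modulus_bounds(1,4) by linarith+
  then have "0 \<le> a mod int p" "a mod int p < int p"
    and "0 \<le> a mod (int p * int p)" "a mod (int p * int p) < int p * int p"
    by simp_all
  then show "\<bar>a mod int p\<bar> \<le> int p * int p" "\<bar>a mod (int p * int p)\<bar> \<le> int p * int p"
    using modulus_bounds(4) unfolding abs_le_iff by (intro conjI; linarith)+
qed

lemma abs_mod_square_div_le_square: "\<bar>a mod (int p * int p) div int p\<bar> \<le> int p * int p"
proof -
  have "0 < int p" "0 < int p * int p"
    using modulus_bounds(1,4) by linarith+
  then have "0 \<le> a mod (int p * int p) div int p"
    and "a mod (int p * int p) div int p \<le> a mod (int p * int p)"
    using zdiv_mono2[of "a mod (int p * int p)" 1 "int p"]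
    by (simp_all add: pos_imp_zdiv_nonneg_iff)
  then show ?thesis
    using abs_mod_le_square(2)[of a] by linarith
qed

lemma abs_le_pow4_if_le_modulus_square: "\<bar>v\<bar> \<le> int p * int p \<Longrightarrow> \<bar>v\<bar> \<le> int p ^ 4"
  using modulus_bounds(1) by (intro abs_le_pow4_if_le_square) auto

lemmas value_bounds =
  bounded_mem_upd abs_mult_le_pow4 abs_le_pow4_if_le_modulus_square abs_mod_le_square

lemma not_dvd_base: "\<not> p dvd g"
  using g_gt_1 g_lt_p by (auto dest: dvd_imp_le)

lemma not_dvd_power: "\<not> int p dvd int g ^ k"
  using not_dvd_base prime by (metis of_nat_dvd_iff of_nat_power prime_dvd_power)

lemma power_inverse: "[int g ^ ((p - 2) * k) * int g ^ k = 1] (mod int p)"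
proof -
  have "[int g ^ (p - 1) = 1] (mod int p)"
    using fermat_theorem[OF prime not_dvd_base] by (metis cong_int_iff of_nat_1 of_nat_power)
  then have "[(int g ^ (p - 1)) ^ k = 1] (mod int p)"
    using cong_pow by fastforce
  moreover have "(p - 2) * k + k = (p - 1) * k"
    using modulus_bounds(1) by (simp add: algebra_simps)
  ultimately show ?thesis
    by (simp flip: power_add power_mult)
qed

lemma fermat_quotient_of_power:
  "(int g ^ (p * k) mod (int p * int p) div int p * (int g ^ ((p - 2) * k) mod int p)) mod int p
     = fermat_quotient p (int g ^ k mod int p)"
proof -
  have "[int g ^ ((p - 2) * k) mod int p * int g ^ k = 1] (mod int p)"
    using power_inverse by (simp add: cong_def mod_mult_left_eq)
  from fermat_quotient_via_pth_power[OF prime not_dvd_power this]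
  show ?thesis
    by (simp add: power_mult mult.commute power2_eq_square)
qed

lemma powers_loop_entry:
  "inv_powers p g 0 (run prog 5 (init_state p g)) \<and> bounded_run prog (int p ^ 4) 5 (init_state p g)"
  using modulus_bounds
  by (simp add: init_state_def exec_prog_simps inv_powers_def)
    (intro conjI bounded_mem_zero value_bounds;
      (simp add: abs_le_iff)?; use modulus_bounds in linarith)

lemma powers_loop_step:
  assumes "k < p - 2" and "inv_powers p g k s"
  shows "inv_powers p g (Suc k) (run prog 5 s) \<and> bounded_run prog (int p ^ 4) 5 s"
proof -
  obtain M where s: "s = (5, M)"
    and regs: "M 0 = int p" "M 1 = int g" "M 4 = int p * int p" "M 5 = 1"
      "M 6 = int p - 2 - int k" "M 7 = int g ^ k mod (int p * int p)"
    and table: "\<forall>a<0. M a = 0" and bounded: "bounded_mem (int p ^ 4) M"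
    using assms(2) by (cases s) (simp add: inv_powers_def)
  have counter: "int k < int p - 2"
    using assms(1) by linarith
  have power_step:
    "int g ^ k mod (int p * int p) * int g mod (int p * int p) = int g ^ Suc k mod (int p * int p)"
    by (metis mod_mult_left_eq power_Suc2)
  show ?thesis
    using regs table bounded counter
    by (simp add: s exec_prog_simps inv_powers_def power_step)
      (intro conjI value_bounds;
        (assumption | (simp add: abs_le_iff; use modulus_bounds in linarith)))
qed

lemma quotients_loop_entry:
  assumes "inv_powers p g (p - 2) s"
  shows "inv_quotients p g 0 (run prog 10 s) \<and> bounded_run prog (int p ^ 4) 10 s"
proof -
  obtain M where s: "s = (5, M)"
    and regs: "M 0 = int p" "M 1 = int g" "M 4 = int p * int p" "M 5 = 1" "M 6 = 0"
      "M 7 = int g ^ (p - 2) mod (int p * int p)"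
    and table: "\<forall>a<0. M a = 0" and bounded: "bounded_mem (int p ^ 4) M"
    using assms modulus_bounds(1) by (cases s) (simp add: inv_powers_def)
  have "p = Suc (Suc (p - 2))"
    using modulus_bounds(1) by simp
  then have "int g ^ (p - 2) * int g * int g = int g ^ p"
    by (metis mult.assoc power_Suc2)
  then have g_pow_p: "int g ^ (p - 2) mod (int p * int p) * int g mod (int p * int p) * int g
      mod (int p * int p) = int g ^ p mod (int p * int p)"
    by (metis mod_mult_left_eq)
  have g_inverse: "int g ^ (p - 2) mod (int p * int p) mod int p = int g ^ (p - 2) mod int p"
    by (simp add: mod_mod_cancel)
  show ?thesis
    using regs table bounded modulus_bounds
    by (simp add: s exec_prog_simps inv_quotients_def quotient_table_def g_pow_p g_inverse)
      (intro conjI value_bounds;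
        (assumption | (simp add: abs_le_iff; use modulus_bounds in linarith)))
qed

lemma quotients_loop_step:
  assumes "k < p - 1" and "inv_quotients p g k s"
  shows "inv_quotients p g (Suc k) (run prog 15 s) \<and> bounded_run prog (int p ^ 4) 15 s"
proof -
  define x where "x = int g ^ k mod int p"
  define h where "h = int g ^ ((p - 2) * k) mod int p"
  define B where "B = int g ^ (p * k) mod (int p * int p)"
  obtain M where s: "s = (19, M)"
    and regs: "M 0 = int p" "M 1 = int g" "M 4 = int p * int p" "M 5 = 1" "M 6 = int p - 1 - int k"
      "M 9 = int g ^ (p - 2) mod int p" "M 10 = int g ^ p mod (int p * int p)"
      "M 11 = x" "M 12 = h" "M 13 = B"
    and table: "\<forall>a<0. M a = quotient_table p g k a" and bounded: "bounded_mem (int p ^ 4) M"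
    using assms(2) by (cases s) (simp add: inv_quotients_def x_def h_def B_def)
  have counter: "int k < int p - 1"
    using assms(1) by linarith
  have x: "0 \<le> x" "x < int p"
    using modulus_bounds(1) by (simp_all add: x_def)
  have "\<bar>fermat_quotient p x\<bar> < int p"
    using fermat_quotient_range[of p x] modulus_bounds(1) by simp
  then have quotient_range: "\<bar>fermat_quotient p x\<bar> \<le> int p * int p"
    using modulus_bounds(4) by linarith
  have ranges: "\<bar>x\<bar> \<le> int p * int p" "\<bar>h\<bar> \<le> int p * int p" "\<bar>B\<bar> \<le> int p * int p"
      "\<bar>B div int p\<bar> \<le> int p * int p"
    unfolding x_def h_def B_def by (simp_all only: abs_mod_le_square abs_mod_square_div_le_square)
  have updates:
    "x * int g mod int p = int g ^ Suc k mod int p"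
    "h * (int g ^ (p - 2) mod int p) mod int p = int g ^ ((p - 2) * Suc k) mod int p"
    "B * (int g ^ p mod (int p * int p)) mod (int p * int p)
       = int g ^ (p * Suc k) mod (int p * int p)"
    unfolding x_def h_def B_def
    by (metis mod_mult_left_eq power_Suc2) (simp_all add: mod_mult_eq power_add ac_simps)
  have quotient: "B div int p * h mod int p = fermat_quotient p x"
    using fermat_quotient_of_power[of k] by (simp add: x_def h_def B_def)
  have table_Suc:
    "quotient_table p g (Suc k) = (quotient_table p g k)(-2 - x := fermat_quotient p x)"
    unfolding quotient_table_def x_def by (auto simp: fun_eq_iff less_Suc_eq)
  show ?thesis
    using regs table bounded counter x ranges quotient_range
    by (simp add: s exec_prog_simps inv_quotients_def updates quotient table_Suc)
      (intro conjI value_bounds;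
        (assumption | (simp add: abs_le_iff; use modulus_bounds x counter in linarith)))
qed

lemma copy_loop_entry:
  assumes "inv_quotients p g (p - 1) s"
  shows "inv_copy p g 0 (run prog 1 s) \<and> bounded_run prog (int p ^ 4) 1 s"
proof -
  obtain M where s: "s = (19, M)" and regs: "M 0 = int p" "M 6 = 0"
    and table: "\<forall>a<0. M a = quotient_table p g (p - 1) a" and bounded: "bounded_mem (int p ^ 4) M"
    using assms modulus_bounds(1) by (cases s) (simp add: inv_quotients_def)
  then show ?thesis
    by (simp add: exec_prog_simps inv_copy_def)
qed

lemma copy_loop_step:
  assumes "k < p - 1" and "inv_copy p g k s"
  shows "inv_copy p g (Suc k) (run prog 10 s) \<and> bounded_run prog (int p ^ 4) 10 s"
proof -
  define i where "i = int p - int k"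
  obtain M where s: "s = (34, M)" and regs: "M 0 = i"
    and table: "\<forall>a<0. M a = quotient_table p g (p - 1) a"
    and copied: "\<forall>a. i < a \<and> a \<le> int p \<longrightarrow> M a = quotient_table p g (p - 1) (-a)"
    and bounded: "bounded_mem (int p ^ 4) M"
    using assms(2) by (cases s) (simp add: inv_copy_def i_def)
  have i: "2 \<le> i" "i \<le> int p"
    using assms(1) by (simp_all add: i_def)
  have "\<bar>quotient_table p g (p - 1) (-i)\<bar> \<le> int p * int p"
    using abs_quotient_table_less[of p g "p - 1" "-i"] modulus_bounds(1,4) by simp
  then show ?thesis
    using regs table copied bounded i
    apply (simp add: s exec_prog_simps inv_copy_def)
    apply (intro conjI value_bounds;
        (assumption | (simp add: abs_le_iff; use modulus_bounds i in linarith))?)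
    apply (auto simp: i_def)
    done
qed

lemma copy_loop_exit:
  assumes "inv_copy p g (p - 1) s"
  shows "halted prog (run prog 3 s) \<and> bounded_run prog (int p ^ 4) 3 s
    \<and> (\<forall>a. 1 < a \<and> a \<le> int p \<longrightarrow> snd (run prog 3 s) a = quotient_table p g (p - 1) (-a))"
proof -
  obtain M where s: "s = (34, M)" and regs: "M 0 = 1"
    and copied: "\<forall>a. 1 < a \<and> a \<le> int p \<longrightarrow> M a = quotient_table p g (p - 1) (-a)"
    and bounded: "bounded_mem (int p ^ 4) M"
    using assms modulus_bounds(1) by (cases s) (simp add: inv_copy_def)
  then show ?thesis
    by (simp add: exec_prog_simps halted_def)
      (intro conjI value_bounds;
        (assumption | (simp add: abs_le_iff; use modulus_bounds in linarith)))
qed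

lemma quotient_table_output:
  assumes "residue_primroot p g" and "u < p - 1"
  shows "quotient_table p g (p - 1) (-(2 + int u)) = fermat_quotient p (int u)"
proof (cases "u = 0")
  case True
  then show ?thesis
    by (simp add: quotient_table_def fermat_quotient_def)
next
  case False
  have "u \<in> totatives p"
    using False assms(2) prime by (simp add: totatives_prime)
  moreover have "(\<lambda>i. g ^ i mod p) ` {..<totient p} = totatives p"
    using residue_primroot_is_generator[OF prime_gt_1_nat[OF prime] assms(1)]
    by (simp add: bij_betw_def)
  ultimately obtain j where "j < totient p" and "g ^ j mod p = u"
    by force
  then have "j < p - 1" and "int g ^ j mod int p = int u"
    using prime by (simp_all add: totient_prime flip: of_nat_power of_nat_mod)
  then show ?thesis
    by (auto simp: quotient_table_def)
qed

lemma prog_computes_fermat_quotients: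
  assumes "residue_primroot p g"
  shows "\<exists>n \<le> 30 * p. halted prog (run prog n (init_state p g))
    \<and> bounded_run prog (int p ^ 4) n (init_state p g)
    \<and> (\<forall>u < p - 1. snd (run prog n (init_state p g)) (2 + int u) = fermat_quotient p (int u))"
proof -
  define s0 where "s0 = init_state p g"
  define s1 where "s1 = run prog 5 s0"
  define s2 where "s2 = run prog (5 * (p - 2)) s1"
  define s3 where "s3 = run prog 10 s2"
  define s4 where "s4 = run prog (15 * (p - 1)) s3"
  define s5 where "s5 = run prog 1 s4"
  define s6 where "s6 = run prog (10 * (p - 1)) s5"
  define s7 where "s7 = run prog 3 s6"
  have powers0: "inv_powers p g 0 s1" "bounded_run prog (int p ^ 4) 5 s0"
    using powers_loop_entry by (simp_all add: s0_def s1_def)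
  have powers: "inv_powers p g (p - 2) s2" "bounded_run prog (int p ^ 4) (5 * (p - 2)) s1"
    using run_iterate[of "p - 2" "inv_powers p g", OF powers_loop_step _ powers0(1)]
    by (auto simp: s2_def inv_powers_def)
  have quotients0: "inv_quotients p g 0 s3" "bounded_run prog (int p ^ 4) 10 s2"
    using quotients_loop_entry[OF powers(1)] by (simp_all add: s3_def)
  have quotients: "inv_quotients p g (p - 1) s4" "bounded_run prog (int p ^ 4) (15 * (p - 1)) s3"
    using run_iterate[of "p - 1" "inv_quotients p g", OF quotients_loop_step _ quotients0(1)]
    by (auto simp: s4_def inv_quotients_def)
  have copy0: "inv_copy p g 0 s5" "bounded_run prog (int p ^ 4) 1 s4"
    using copy_loop_entry[OF quotients(1)] by (simp_all add: s5_def)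
  have copy: "inv_copy p g (p - 1) s6" "bounded_run prog (int p ^ 4) (10 * (p - 1)) s5"
    using run_iterate[of "p - 1" "inv_copy p g", OF copy_loop_step _ copy0(1)]
    by (auto simp: s6_def inv_copy_def)
  have halt: "halted prog s7" "bounded_run prog (int p ^ 4) 3 s6"
      "\<forall>a. 1 < a \<and> a \<le> int p \<longrightarrow> snd s7 a = quotient_table p g (p - 1) (-a)"
    using copy_loop_exit[OF copy(1)] by (simp_all add: s7_def)
  define n where "n = 5 + 5 * (p - 2) + 10 + 15 * (p - 1) + 1 + 10 * (p - 1) + 3"
  have "run prog n s0 = s7"
    by (simp only: n_def run_add s1_def s2_def s3_def s4_def s5_def s6_def s7_def)
  moreover have "bounded_run prog (int p ^ 4) n s0"
    unfolding n_def using powers0(2) powers(2) quotients0(2) quotients(2) copy0(2) copy(2) halt(2)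
    by (simp only: s1_def s2_def s3_def s4_def s5_def s6_def s7_def bounded_run_add run_add)
  moreover have "n \<le> 30 * p"
    using modulus_bounds(1) by (simp add: n_def)
  moreover have "int u + 2 \<le> int p" if "u < p - 1" for u
    using that by linarith
  ultimately show ?thesis
    using halt quotient_table_output[OF assms] unfolding s0_def by (intro exI[of _ n]) auto
qed

end

theorem theorem5:
  "\<exists>(prog :: instr list) (C :: nat) (c :: nat).
     \<forall>p g :: nat. prime p \<longrightarrow> residue_primroot p g \<longrightarrow> 1 < g \<longrightarrow> g < p \<longrightarrow>
       (\<exists>n \<le> C * p.
          halted prog (run prog n (init_state p g)) \<and>
          (\<forall>m \<le> n. \<forall>a. \<bar>snd (run prog m (init_state p g)) a\<bar> \<le> int p ^ c) \<and>
          (\<forall>u < p - 1. snd (run prog n (init_state p g)) (2 + int u)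
                          = fermat_quotient p (int u)))"
  using prog_computes_fermat_quotients unfolding bounded_run_def bounded_mem_def by blast

end
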